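(* Let $m\ge 0$ be an integer, $K\ge 1$, $h>0$, $L=Kh$, and work on the periodic interval $\mathbb{T}_L=\mathbb{R}/L\mathbb{Z}$. Let $c>0$ and $\Delta t>0$, and let $S_{\pm}$ be the shift operators $S_{\pm}f(x)=f(x\pm c\Delta t/2)$. Let $\mathcal{I}$ (resp. $\mathcal{J}$) denote the Hermite interpolation operator of order $m$ on the primary grid (resp. dual grid) defined below. Suppose $p^h(\cdot,n\Delta t)\in\operatorname{Range}(\mathcal{I})$ and $v^h(\cdot,(n+\tfrac12)\Delta t)\in\operatorname{Range}(\mathcal{J})$ for all integers $n\ge 0$ (with also $v^h(\cdot,-\Delta t/2)\in\operatorname{Range}(\mathcal J)$ given), and that for all $n\ge0$, with $t=n\Delta t$, $$v^h(\cdot,t+\tfrac{\Delta t}{2})=v^h(\cdot,t-\tfrac{\Delta t}{2})+\mathcal{J}S_{+}p^h(\cdot,t)-\mathcal{J}S_{-}p^h(\cdot,t),$$ $$p^h(\cdot,t+\Delta t)=p^h(\cdot,t)+\mathcal{I}S_{+}v^h(\cdot,t+\tfrac{\Delta t}{2})-\mathcal{I}S_{-}v^h(\cdot,t+\tfrac{\Delta t}{2}).$$ Define $P^h_{\pm}(\cdot,t)=p^h(\cdot,t)\mp S_{\pm}v^h(\cdot,t-\tfrac{\Delta t}{2})$ and $V^h_{\pm}(\cdot,t+\tfrac{\Delta t}{2})=v^h(\cdot,t+\tfrac{\Delta t}{2})\mp S_{\pm}p^h(\cdot,t)$, and $$Q^h(t)=|P^h_+(\cdot,t)|_{m+1}^2+|P^h_-(\cdot,t)|_{m+1}^2,\qquad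 R^h(t+\tfrac{\Delta t}{2})=|V^h_+(\cdot,t+\tfrac{\Delta t}{2})|_{m+1}^2+|V^h_-(\cdot,t+\tfrac{\Delta t}{2})|_{m+1}^2.$$ Then for every integer $n\ge 0$, $Q^h((n+1)\Delta t)=R^h((n+\tfrac12)\Delta t)=Q^h(n\Delta t)$; in particular $Q^h(n\Delta t)=R^h((n+\tfrac12)\Delta t)=Q^h(0)$ for all $n$.
   Context: Primary grid: nodes $x_j=jh$, $j=0,\dots,K-1$ (mod $L$); dual grid: nodes $x_{j+1/2}=(j+\tfrac12)h$. For a smooth $L$-periodic function $f$, the Hermite interpolant of order $m$ on the primary grid, $\mathcal{I}f$, is the unique $L$-periodic function which on each cell $[x_j,x_{j+1}]$ is a polynomial of degree at most $2m+1$ and whose value and first $m$ derivatives agree with those of $f$ at both endpoints of the cell; $\mathcal{J}$ is defined identically with the dual-grid nodes as cell endpoints. Both are linear projections, and their ranges consist of $C^m$ periodic piecewise polynomials. The seminorm is $|f|_{m+1}^2=\int_{\mathbb{T}_L}|\partial_x^{m+1}f|^2\,dx$ with associated semi-inner product $\langle f,g\rangle_{m+1}=\int_{\mathbb{T}_L}\partial_x^{m+1}f\,\partial_x^{m+1}g\,dx$. It is a known fact (Goodrich et al.) that each of $\mathcal{I},\mathcal{J}$ satisfies the orthogonality property $\langle \mathcal{I}f,\,g-\mathcal{I}g\rangle_{m+1}=0$ for all smooth (or range-of-interpolation) periodic $f,g$. The displayed update is the one-dimensional Hermite-leapfrog scheme for $p_t=c\,v_x$, $v_t=c\,p_x$ (valid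 as a description of the scheme when $c\Delta t<h$). *)

theory Defs
  imports "HOL-Analysis.Analysis" "HOL-Computational_Algebra.Polynomial"
begin

text \<open>Shift operator: (shift a f) x = f (x + a).  S_+ = shift (c dt/2), S_- = shift (-(c dt/2)).\<close>
definition shift :: "real \<Rightarrow> (real \<Rightarrow> real) \<Rightarrow> real \<Rightarrow> real" where
  "shift a f = (\<lambda>x. f (x + a))"

definition hermite_interpolant ::
  "nat \<Rightarrow> real \<Rightarrow> nat \<Rightarrow> real \<Rightarrow> (real \<Rightarrow> real) \<Rightarrow> (real \<Rightarrow> real) \<Rightarrow> bool" where
  "hermite_interpolant m h K x0 f g \<longleftrightarrow>
     (\<forall>x. g (x + real K * h) = g x) \<and>
     (\<forall>j::int. \<exists>q::real poly. degree q \<le> 2 * m + 1 \<and>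
        (\<forall>x\<in>{x0 + of_int j * h .. x0 + (of_int j + 1) * h}. g x = poly q x) \<and>
        (\<forall>k\<le>m. poly ((pderiv ^^ k) q) (x0 + of_int j * h) = (deriv ^^ k) f (x0 + of_int j * h)
              \<and> poly ((pderiv ^^ k) q) (x0 + (of_int j + 1) * h)
                  = (deriv ^^ k) f (x0 + (of_int j + 1) * h)))"

text \<open>The Hermite interpolation operator (primary grid: x0 = 0; dual grid: x0 = h/2).\<close>
definition hermite_op ::
  "nat \<Rightarrow> real \<Rightarrow> nat \<Rightarrow> real \<Rightarrow> (real \<Rightarrow> real) \<Rightarrow> real \<Rightarrow> real" where
  "hermite_op m h K x0 f = (THE g. hermite_interpolant m h K x0 f g)"

text \<open>Range of the (projection) operator = its fixed points: the L-periodic C^m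
  piecewise polynomials of degree at most 2m+1 with breakpoints at the grid nodes.\<close>
definition hermite_range :: "nat \<Rightarrow> real \<Rightarrow> nat \<Rightarrow> real \<Rightarrow> (real \<Rightarrow> real) set" where
  "hermite_range m h K x0 = {g. hermite_interpolant m h K x0 g g}"

definition seminorm_sq :: "nat \<Rightarrow> real \<Rightarrow> nat \<Rightarrow> (real \<Rightarrow> real) \<Rightarrow> real" where
  "seminorm_sq m h K f = integral {0 .. real K * h} (\<lambda>x. ((deriv ^^ Suc m) f x)\<^sup>2)"

text \<open>p x t = p^h(x,t), v x t = v^h(x,t).\<close>
definition Qh :: "nat \<Rightarrow> real \<Rightarrow> nat \<Rightarrow> real \<Rightarrow> real \<Rightarrow>
    (real \<Rightarrow> real \<Rightarrow> real) \<Rightarrow> (real \<Rightarrow> real \<Rightarrow> real) \<Rightarrow> real \<Rightarrow> real" where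
  "Qh m h K c dt p v t =
     seminorm_sq m h K (\<lambda>x. p x t - shift (c * dt / 2) (\<lambda>y. v y (t - dt / 2)) x)
   + seminorm_sq m h K (\<lambda>x. p x t + shift (- (c * dt / 2)) (\<lambda>y. v y (t - dt / 2)) x)"

definition Rh :: "nat \<Rightarrow> real \<Rightarrow> nat \<Rightarrow> real \<Rightarrow> real \<Rightarrow>
    (real \<Rightarrow> real \<Rightarrow> real) \<Rightarrow> (real \<Rightarrow> real \<Rightarrow> real) \<Rightarrow> real \<Rightarrow> real" where
  "Rh m h K c dt p v s =
     seminorm_sq m h K (\<lambda>x. v x s - shift (c * dt / 2) (\<lambda>y. p y (s - dt / 2)) x)
   + seminorm_sq m h K (\<lambda>x. v x s + shift (- (c * dt / 2)) (\<lambda>y. p y (s - dt / 2)) x)"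

end

theory Submission
  imports Defs
begin

text \<open>Write \<open>E(f, g) = |f - S\<^sub>+ g|\<^sup>2 + |f + S\<^sub>- g|\<^sup>2\<close>, so that \<open>Q\<^sup>h(t) = E(p, v)\<close> and
  \<open>R\<^sup>h(t + \<Delta>t/2) = E(v, p)\<close>, and each half step of the scheme replaces \<open>(f, w)\<close> by
  \<open>(w + \<I>a - \<I>b, f)\<close> with \<open>a = S\<^sub>+ f\<close>, \<open>b = S\<^sub>- f\<close>. Translations preserve the seminorm,
  so \<open>E(f, w) = |b - w|\<^sup>2 + |a + w|\<^sup>2\<close>. The key fact is the orthogonality of the
  interpolation error: \<open>\<langle>u, a - \<I>a\<rangle>\<^sub>m\<^sub>+\<^sub>1 = 0\<close> for every \<open>u\<close> in the range of \<open>\<I>\<close>. On a cell, \<open>u\<close>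
  is a polynomial of degree \<open>2m+1\<close> and \<open>a - \<I>a\<close> vanishes to order \<open>m\<close> at both endpoints,
  so \<open>m + 1\<close> integrations by parts leave no boundary terms. Expanding
  \<open>E(w + \<I>a - \<I>b, f)\<close> by bilinearity and discarding the orthogonal terms returns
  \<open>|b - w|\<^sup>2 + |a + w|\<^sup>2\<close>; induction over the time steps concludes.\<close>

section \<open>Two-point Hermite interpolation by polynomials\<close>

lemma higher_pderiv_diff:
  "(pderiv ^^ n) (p - q) = (pderiv ^^ n) p - (pderiv ^^ n) (q :: 'a :: idom poly)"
  by (induction n arbitrary: p q) (simp_all del: funpow.simps add: funpow_Suc_right pderiv_diff)

lemma higher_pderiv_eq_0_if_degree_le:
  fixes q :: "real poly"
  assumes "degree q \<le> n"
  shows "(pderiv ^^ Suc n) q = 0"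
proof -
  have "degree ((pderiv ^^ n) q) = 0" using assms by (simp add: degree_higher_pderiv)
  then show ?thesis by (simp add: pderiv_eq_0_iff)
qed

lemma higher_pderiv_pcompose_linear:
  "(pderiv ^^ k) (p \<circ>\<^sub>p [:c, 1:]) = ((pderiv ^^ k) p) \<circ>\<^sub>p [:c, 1 :: real:]"
  by (induction k) (simp_all add: pderiv_pcompose pderiv_pCons)

lemma poly_higher_pderiv_pcompose_linear:
  "poly ((pderiv ^^ k) (q \<circ>\<^sub>p [:c, 1:])) y = poly ((pderiv ^^ k) q) (y + (c :: real))"
  by (simp add: higher_pderiv_pcompose_linear poly_pcompose algebra_simps)

lemma poly_higher_pderiv_eq_coeff:
  "poly ((pderiv ^^ k) p) a = fact k * coeff (p \<circ>\<^sub>p [:a, 1:]) k" for p :: "real poly"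
proof -
  have "poly ((pderiv ^^ k) p) a = poly ((pderiv ^^ k) (p \<circ>\<^sub>p [:a, 1:])) 0"
    by (simp add: poly_higher_pderiv_pcompose_linear)
  then show ?thesis by (simp add: poly_0_coeff_0 coeff_higher_pderiv pochhammer_fact)
qed

lemma pcompose_power: "(p ^ n) \<circ>\<^sub>p q = (p \<circ>\<^sub>p q) ^ n"
  by (induction n) (simp_all add: pcompose_1 pcompose_mult)

lemma poly_higher_pderiv_root_power_mult:
  fixes t :: "real poly"
  assumes "k \<le> n"
  shows "poly ((pderiv ^^ k) ([:-b, 1:] ^ n * t)) b = (if k < n then 0 else fact n * poly t b)"
proof -
  have "([:-b, 1:] ^ n * t) \<circ>\<^sub>p [:b, 1:] = monom 1 n * (t \<circ>\<^sub>p [:b, 1:])"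
    by (simp add: pcompose_mult pcompose_power pcompose_pCons monom_altdef)
  with assms show ?thesis
    by (auto simp: poly_higher_pderiv_eq_coeff coeff_monom_mult poly_0_coeff_0[symmetric] poly_pcompose)
qed

text \<open>Corrections by multiples of \<open>s * (X - a)^k\<close> fix the derivatives at \<open>a\<close> one order at a
  time without disturbing the lower ones.\<close>
lemma exists_poly_higher_pderivs_at:
  fixes a :: real and s q :: "real poly"
  assumes "poly s a \<noteq> 0"
  shows "\<exists>r. degree r \<le> n - 1 \<and> (\<forall>k<n. poly ((pderiv ^^ k) (q + s * r)) a = D k)"
proof (induction n)
  case 0
  show ?case by (rule exI[of _ 0]) simp
next
  case (Suc n)
  then obtain r where r: "degree r \<le> n - 1" "\<forall>k<n. poly ((pderiv ^^ k) (q + s * r)) a = D k"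
    by blast
  define c where "c = (D n - poly ((pderiv ^^ n) (q + s * r)) a) / (fact n * poly s a)"
  define r' where "r' = r + smult c ([:-a, 1:] ^ n)"
  have r'_eq: "q + s * r' = (q + s * r) + smult c ([:-a, 1:] ^ n * s)"
    by (simp add: r'_def algebra_simps)
  have derivs: "poly ((pderiv ^^ k) (q + s * r')) a
      = poly ((pderiv ^^ k) (q + s * r)) a + c * (if k < n then 0 else fact n * poly s a)"
    if "k \<le> n" for k
    unfolding r'_eq higher_pderiv_add higher_pderiv_smult
    using poly_higher_pderiv_root_power_mult[OF that] by simp
  have "degree (smult c ([:-a, 1:] ^ n)) \<le> n"
    using degree_smult_le[of c "[:-a, 1:] ^ n"] by (simp add: degree_linear_power)
  then have "degree r' \<le> n"
    unfolding r'_def using r(1) degree_add_le[of r n "smult c ([:-a, 1:] ^ n)"] by linarith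
  moreover have "poly ((pderiv ^^ k) (q + s * r')) a = D k" if "k < Suc n" for k
  proof (cases "k < n")
    case True
    then show ?thesis using derivs[of k] r(2) by simp
  next
    case False
    with that have "k = n" by simp
    then show ?thesis using derivs[of k] assms by (simp add: c_def field_simps)
  qed
  ultimately show ?case by (intro exI[of _ r']) simp
qed

lemma hermite_poly_exists:
  fixes a b :: real
  assumes "a \<noteq> b"
  shows "\<exists>q. degree q \<le> 2 * m + 1 \<and>
    (\<forall>k\<le>m. poly ((pderiv ^^ k) q) a = A k \<and> poly ((pderiv ^^ k) q) b = B k)"
proof -
  obtain r1 where r1: "degree r1 \<le> m" "\<forall>k<Suc m. poly ((pderiv ^^ k) (0 + 1 * r1)) a = A k"
    using exists_poly_higher_pderivs_at[where s=1 and a=a and q=0 and n="Suc m" and D=A] by auto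
  define s where "s = [:-a, 1:] ^ Suc m"
  have "poly s b \<noteq> 0" using assms by (simp add: s_def)
  then obtain r2 where r2: "degree r2 \<le> m" "\<forall>k<Suc m. poly ((pderiv ^^ k) (r1 + s * r2)) b = B k"
    using exists_poly_higher_pderivs_at[where n="Suc m" and q=r1 and D=B and s=s and a=b] by auto
  have "degree (s * r2) \<le> Suc m + m"
    using degree_mult_le[of s r2] r2(1) by (simp add: s_def degree_linear_power del: power_Suc)
  then have "degree (r1 + s * r2) \<le> 2 * m + 1"
    using degree_add_le[of r1 "2*m+1" "s * r2"] r1(1) by linarith
  moreover have "poly ((pderiv ^^ k) (r1 + s * r2)) a = A k" if "k \<le> m" for k
    using r1(2) that poly_higher_pderiv_root_power_mult[of k "Suc m" a r2]
    by (simp add: higher_pderiv_add s_def)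
  ultimately show ?thesis using r2(2) by (intro exI[of _ "r1 + s * r2"]) auto
qed

lemma order_ge_if_higher_pderivs_vanish:
  fixes d :: "real poly"
  assumes "d \<noteq> 0" "\<forall>k\<le>m. poly ((pderiv ^^ k) d) a = 0"
  shows "Suc m \<le> order a d"
  using assms
proof (induction m arbitrary: d)
  case 0
  then show ?case using order_root[of d a] by auto
next
  case (Suc m)
  have root: "poly d a = 0" using Suc.prems(2) by (metis funpow_0 le0)
  have "pderiv d \<noteq> 0"
    using Suc.prems(1) root pderiv_iszero[of d] by force
  moreover have "\<forall>k\<le>m. poly ((pderiv ^^ k) (pderiv d)) a = 0"
    using Suc.prems(2) by (metis Suc_le_mono funpow_Suc_right o_apply)
  ultimately have "Suc m \<le> order a (pderiv d)" using Suc.IH by blast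
  then show ?case using order_pderiv[OF Suc.prems(1) root] by simp
qed

lemma hermite_poly_unique:
  fixes a b :: real and q1 q2 :: "real poly"
  assumes "a \<noteq> b" "degree q1 \<le> 2 * m + 1" "degree q2 \<le> 2 * m + 1"
    and "\<forall>k\<le>m. poly ((pderiv ^^ k) q1) a = poly ((pderiv ^^ k) q2) a"
    and "\<forall>k\<le>m. poly ((pderiv ^^ k) q1) b = poly ((pderiv ^^ k) q2) b"
  shows "q1 = q2"
proof (rule ccontr)
  define d where "d = q1 - q2"
  assume "q1 \<noteq> q2"
  then have d0: "d \<noteq> 0" by (simp add: d_def)
  have "degree d \<le> 2 * m + 1" unfolding d_def using assms(2,3) degree_diff_le by blast
  have "Suc m \<le> order a d" "Suc m \<le> order b d"
    using order_ge_if_higher_pderivs_vanish[OF d0] assms(4,5)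
    by (simp_all add: d_def higher_pderiv_diff)
  then obtain r where dr: "d = [:-a, 1:] ^ Suc m * r"
    using order_divides[of a "Suc m" d] by (auto elim: dvdE)
  have r0: "r \<noteq> 0" using d0 dr by auto
  have "order b ([:-a, 1:] ^ Suc m) = 0" using assms(1) by (intro order_0I) simp
  then have "order b r = order b d" using dr order_mult[of "[:-a, 1:] ^ Suc m" r b] d0 by simp
  with \<open>Suc m \<le> order b d\<close> have "[:-b, 1:] ^ Suc m dvd r"
    using order_divides[of b "Suc m" r] by (simp del: power_Suc)
  then have "Suc m \<le> degree r"
    using r0 dvd_imp_degree_le degree_linear_power by metis
  moreover have "degree d = Suc m + degree r"
    using dr r0 by (simp add: degree_mult_eq degree_linear_power del: power_Suc)
  ultimately show False using \<open>degree d \<le> 2 * m + 1\<close> by linarith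
qed


section \<open>Piecewise polynomial functions\<close>

definition locally_poly_at :: "(real \<Rightarrow> real) \<Rightarrow> real \<Rightarrow> bool" where
  "locally_poly_at f x \<longleftrightarrow> (\<exists>e>0. \<exists>P. \<forall>y\<in>ball x e. f y = poly P y)"

definition one_sided_poly :: "(real \<Rightarrow> real) \<Rightarrow> bool" where
  "one_sided_poly f \<longleftrightarrow> (\<forall>x. (\<exists>e>0. \<exists>P. \<forall>y\<in>{x-e<..<x}. f y = poly P y) \<and>
                             (\<exists>e>0. \<exists>P. \<forall>y\<in>{x<..<x+e}. f y = poly P y))"

lemma higher_deriv_eq_poly_on_open:
  fixes f :: "real \<Rightarrow> real" and P :: "real poly"
  assumes "open S" "\<forall>y\<in>S. f y = poly P y"
  shows "\<forall>y\<in>S. (deriv ^^ k) f y = poly ((pderiv ^^ k) P) y"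
proof (induction k)
  case 0
  then show ?case using assms by simp
next
  case (Suc k)
  show ?case
  proof
    fix y assume "y \<in> S"
    have "((deriv ^^ k) f has_real_derivative poly (pderiv ((pderiv ^^ k) P)) y) (at y)"
      by (rule has_field_derivative_transform_within_open[OF poly_DERIV assms(1) \<open>y \<in> S\<close>])
        (use Suc in simp)
    then show "(deriv ^^ Suc k) f y = poly ((pderiv ^^ Suc k) P) y"
      by (simp add: DERIV_imp_deriv)
  qed
qed

lemma locally_poly_atI:
  assumes "open S" "x \<in> S" "\<forall>y\<in>S. f y = poly P y"
  shows "locally_poly_at f x"
  using assms open_contains_ball[of S] unfolding locally_poly_at_def by blast

lemma locally_poly_at_higher_deriv:
  assumes "locally_poly_at f x"
  shows "((deriv ^^ k) f has_real_derivative (deriv ^^ Suc k) f x) (at x)"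
proof -
  obtain e P where "e > 0" and P: "\<forall>y\<in>ball x e. f y = poly P y"
    using assms unfolding locally_poly_at_def by blast
  note derivs = higher_deriv_eq_poly_on_open[OF open_ball P]
  have "((deriv ^^ k) f has_real_derivative poly (pderiv ((pderiv ^^ k) P)) x) (at x)"
    by (rule has_field_derivative_transform_within_open[OF poly_DERIV open_ball[of x e]])
      (use derivs \<open>e > 0\<close> in auto)
  moreover have "(deriv ^^ Suc k) f x = poly (pderiv ((pderiv ^^ k) P)) x"
    using derivs[rule_format, of x "Suc k"] \<open>e > 0\<close> by simp
  ultimately show ?thesis by simp
qed

lemma higher_deriv_lincomb_locally_poly:
  assumes "locally_poly_at f x" "locally_poly_at g x"
  shows "(deriv ^^ k) (\<lambda>y. a * f y + b * g y) x = a * (deriv ^^ k) f x + b * (deriv ^^ k) g x"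
proof -
  obtain e1 P where e1: "e1 > 0" "\<forall>y\<in>ball x e1. f y = poly P y"
    using assms(1) unfolding locally_poly_at_def by blast
  obtain e2 Q where e2: "e2 > 0" "\<forall>y\<in>ball x e2. g y = poly Q y"
    using assms(2) unfolding locally_poly_at_def by blast
  have "\<forall>y\<in>ball x (min e1 e2). a * f y + b * g y = poly (smult a P + smult b Q) y"
    using e1 e2 by auto
  from higher_deriv_eq_poly_on_open[OF open_ball this] e1 e2
    higher_deriv_eq_poly_on_open[OF open_ball e1(2)] higher_deriv_eq_poly_on_open[OF open_ball e2(2)]
  show ?thesis by (simp add: higher_pderiv_add higher_pderiv_smult)
qed

lemma higher_deriv_diff_locally_poly:
  "locally_poly_at f x \<Longrightarrow> locally_poly_at g x \<Longrightarrow>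
    (deriv ^^ k) (\<lambda>y. f y - g y) x = (deriv ^^ k) f x - (deriv ^^ k) g x"
  using higher_deriv_lincomb_locally_poly[of f x g k 1 "-1"] by simp

lemma locally_poly_at_binop:
  fixes op :: "real \<Rightarrow> real \<Rightarrow> real"
  assumes "locally_poly_at f x" "locally_poly_at g x"
    and op: "\<And>P Q. \<exists>R. \<forall>y. op (poly P y) (poly Q y) = poly R y"
  shows "locally_poly_at (\<lambda>y. op (f y) (g y)) x"
proof -
  obtain e1 P where "e1 > 0" "\<forall>y\<in>ball x e1. f y = poly P y"
    using assms(1) unfolding locally_poly_at_def by blast
  moreover obtain e2 Q where "e2 > 0" "\<forall>y\<in>ball x e2. g y = poly Q y"
    using assms(2) unfolding locally_poly_at_def by blast
  moreover obtain R where "\<forall>y. op (poly P y) (poly Q y) = poly R y" using op by blast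
  ultimately have "min e1 e2 > 0" "\<forall>y\<in>ball x (min e1 e2). op (f y) (g y) = poly R y" by auto
  then show ?thesis unfolding locally_poly_at_def by blast
qed

lemma one_sided_poly_binop:
  fixes op :: "real \<Rightarrow> real \<Rightarrow> real"
  assumes "one_sided_poly f" "one_sided_poly g"
    and op: "\<And>P Q. \<exists>R. \<forall>y. op (poly P y) (poly Q y) = poly R y"
  shows "one_sided_poly (\<lambda>y. op (f y) (g y))"
  unfolding one_sided_poly_def
proof (intro allI conjI)
  fix x
  obtain e1 P where "e1 > 0" "\<forall>y\<in>{x-e1<..<x}. f y = poly P y"
    using assms(1) unfolding one_sided_poly_def by blast
  moreover obtain e2 Q where "e2 > 0" "\<forall>y\<in>{x-e2<..<x}. g y = poly Q y"
    using assms(2) unfolding one_sided_poly_def by blast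
  moreover obtain R where "\<forall>y. op (poly P y) (poly Q y) = poly R y" using op by blast
  ultimately have "min e1 e2 > 0" "\<forall>y\<in>{x - min e1 e2<..<x}. op (f y) (g y) = poly R y" by auto
  then show "\<exists>e>0. \<exists>P. \<forall>y\<in>{x-e<..<x}. op (f y) (g y) = poly P y" by blast
next
  fix x
  obtain e1 P where "e1 > 0" "\<forall>y\<in>{x<..<x+e1}. f y = poly P y"
    using assms(1) unfolding one_sided_poly_def by blast
  moreover obtain e2 Q where "e2 > 0" "\<forall>y\<in>{x<..<x+e2}. g y = poly Q y"
    using assms(2) unfolding one_sided_poly_def by blast
  moreover obtain R where "\<forall>y. op (poly P y) (poly Q y) = poly R y" using op by blast
  ultimately have "min e1 e2 > 0" "\<forall>y\<in>{x<..<x + min e1 e2}. op (f y) (g y) = poly R y" by auto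
  then show "\<exists>e>0. \<exists>P. \<forall>y\<in>{x<..<x+e}. op (f y) (g y) = poly P y" by blast
qed

lemma one_sided_poly_higher_deriv:
  assumes "one_sided_poly f"
  shows "one_sided_poly ((deriv ^^ k) f)"
  unfolding one_sided_poly_def
proof (intro allI conjI)
  fix x
  obtain e P where "e > 0" "\<forall>y\<in>{x-e<..<x}. f y = poly P y"
    using assms unfolding one_sided_poly_def by blast
  with higher_deriv_eq_poly_on_open[OF open_greaterThanLessThan]
  show "\<exists>e>0. \<exists>P. \<forall>y\<in>{x-e<..<x}. (deriv ^^ k) f y = poly P y" by blast
next
  fix x
  obtain e P where "e > 0" "\<forall>y\<in>{x<..<x+e}. f y = poly P y"
    using assms unfolding one_sided_poly_def by blast
  with higher_deriv_eq_poly_on_open[OF open_greaterThanLessThan]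
  show "\<exists>e>0. \<exists>P. \<forall>y\<in>{x<..<x+e}. (deriv ^^ k) f y = poly P y" by blast
qed

lemma integrable_poly_spike:
  fixes f :: "real \<Rightarrow> real" and P :: "real poly"
  assumes "\<forall>y\<in>{u..v} - {x}. f y = poly P y"
  shows "f integrable_on {u..v}"
proof (rule integrable_spike_finite[where S="{x}" and f="poly P"])
  show "poly P integrable_on {u..v}"
    by (intro integrable_continuous_real) (auto intro: continuous_intros)
qed (use assms in auto)

lemma one_sided_poly_integrable:
  assumes "one_sided_poly f"
  shows "f integrable_on {a..b}"
proof -
  have "f integrable_on cbox a b"
  proof (rule integrable_on_little_subintervals, intro ballI)
    fix x
    obtain e1 P where e1: "e1 > 0" "\<forall>y\<in>{x-e1<..<x}. f y = poly P y"
      using assms unfolding one_sided_poly_def by blast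
    obtain e2 Q where e2: "e2 > 0" "\<forall>y\<in>{x<..<x+e2}. f y = poly Q y"
      using assms unfolding one_sided_poly_def by blast
    have "f integrable_on cbox u v" if "x \<in> cbox u v" "cbox u v \<subseteq> ball x (min e1 e2)" for u v
    proof -
      have "u \<le> x" "x \<le> v" using that(1) by auto
      then have "u \<in> cbox u v" "v \<in> cbox u v" by auto
      then have "u \<in> ball x (min e1 e2)" "v \<in> ball x (min e1 e2)" using that(2) by blast+
      then have "x - e1 < u" "v < x + e2" by (auto simp: dist_real_def)
      then have "f integrable_on {u..x}" "f integrable_on {x..v}"
        using e1(2) e2(2) by (auto intro!: integrable_poly_spike[where x=x])
      then show ?thesis
        using Henstock_Kurzweil_Integration.integrable_combine \<open>u \<le> x\<close> \<open>x \<le> v\<close> by simp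
    qed
    then show "\<exists>d>0. \<forall>u v. x \<in> cbox u v \<and> cbox u v \<subseteq> ball x d \<and> cbox u v \<subseteq> cbox a b \<longrightarrow>
        f integrable_on cbox u v"
      using e1(1) e2(1) by (intro exI[of _ "min e1 e2"]) auto
  qed
  then show ?thesis by simp
qed

lemma higher_deriv_shift:
  "(deriv ^^ k) (\<lambda>x. f (x + a)) = (\<lambda>x. (deriv ^^ k) f (x + a))" for f :: "real \<Rightarrow> real"
proof (induction k)
  case (Suc k)
  have "deriv (\<lambda>x. g (x + a)) = (\<lambda>x. deriv g (x + a))" for g :: "real \<Rightarrow> real"
    unfolding deriv_def using DERIV_shift[of g _ _ a] by simp
  then show ?case using Suc by simp
qed simp

lemma higher_deriv_periodic:
  fixes f :: "real \<Rightarrow> real"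
  assumes "\<forall>x. f (x + L) = f x"
  shows "(deriv ^^ k) f (x + L) = (deriv ^^ k) f x"
proof -
  have "(\<lambda>x. f (x + L)) = f" using assms by simp
  then show ?thesis using higher_deriv_shift[of k f L] by (metis fun_cong)
qed

section \<open>Grids, cells and periodic piecewise polynomials\<close>

definition grid_nodes :: "real \<Rightarrow> real \<Rightarrow> real set" where
  "grid_nodes h x0 = range (\<lambda>j::int. x0 + of_int j * h)"

definition cellwise_poly :: "real \<Rightarrow> real \<Rightarrow> (real \<Rightarrow> real) \<Rightarrow> bool" where
  "cellwise_poly h x0 f \<longleftrightarrow>
     (\<forall>j::int. \<exists>q. \<forall>x\<in>{x0 + of_int j * h .. x0 + (of_int j + 1) * h}. f x = poly q x)"

lemma floor_eq_cell_index:
  fixes x x0 h :: real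
  assumes "h > 0" "x0 + of_int j * h \<le> x" "x < x0 + (of_int j + 1) * h"
  shows "\<lfloor>(x - x0) / h\<rfloor> = j"
  using assms by (intro floor_unique) (simp_all add: le_divide_eq divide_less_eq)

lemma floor_cell_bounds:
  fixes x x0 h :: real
  assumes "h > 0"
  shows "x0 + of_int \<lfloor>(x - x0) / h\<rfloor> * h \<le> x" "x < x0 + (of_int \<lfloor>(x - x0) / h\<rfloor> + 1) * h"
proof -
  have "of_int \<lfloor>(x - x0) / h\<rfloor> \<le> (x - x0) / h" "(x - x0) / h < of_int \<lfloor>(x - x0) / h\<rfloor> + 1"
    by linarith+
  with assms have "of_int \<lfloor>(x - x0) / h\<rfloor> * h \<le> x - x0" "x - x0 < (of_int \<lfloor>(x - x0) / h\<rfloor> + 1) * h"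
    by (simp only: pos_le_divide_eq pos_divide_less_eq)+
  then show "x0 + of_int \<lfloor>(x - x0) / h\<rfloor> * h \<le> x" "x < x0 + (of_int \<lfloor>(x - x0) / h\<rfloor> + 1) * h"
    by linarith+
qed

lemma obtain_cell_left_open:
  fixes x x0 h :: real
  assumes "h > 0"
  obtains j :: int where "x0 + of_int j * h < x" "x \<le> x0 + (of_int j + 1) * h"
proof -
  define j where "j = \<lceil>(x - x0) / h\<rceil> - 1"
  have "of_int j < (x - x0) / h" "(x - x0) / h \<le> of_int j + 1"
    unfolding j_def by linarith+
  with assms have "x0 + of_int j * h < x" "x \<le> x0 + (of_int j + 1) * h"
    by (simp_all add: less_divide_eq divide_le_eq mult.commute)
  then show ?thesis by (rule that)
qed

lemma finite_grid_nodes_Int_interval: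
  assumes "h > 0"
  shows "finite (grid_nodes h x0 \<inter> {a..b})"
proof (rule finite_subset)
  show "grid_nodes h x0 \<inter> {a..b} \<subseteq>
      (\<lambda>j::int. x0 + of_int j * h) ` {\<lceil>(a - x0) / h\<rceil> .. \<lfloor>(b - x0) / h\<rfloor>}"
  proof
    fix x assume "x \<in> grid_nodes h x0 \<inter> {a..b}"
    then obtain j where x: "x = x0 + of_int j * h" "a \<le> x" "x \<le> b"
      unfolding grid_nodes_def by auto
    with assms have "(a - x0) / h \<le> of_int j" "of_int j \<le> (b - x0) / h"
      by (simp_all add: divide_le_eq le_divide_eq)
    then show "x \<in> (\<lambda>j::int. x0 + of_int j * h) ` {\<lceil>(a - x0) / h\<rceil> .. \<lfloor>(b - x0) / h\<rfloor>}"
      using x(1) by (auto simp: ceiling_le_iff le_floor_iff)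
  qed
qed simp

lemma cellwise_poly_one_sided_poly:
  assumes "h > 0" "cellwise_poly h x0 f"
  shows "one_sided_poly f"
  unfolding one_sided_poly_def
proof (intro allI conjI)
  fix x
  obtain j where c: "x0 + of_int j * h < x" "x \<le> x0 + (of_int j + 1) * h"
    using obtain_cell_left_open[OF assms(1)] .
  obtain q where "\<forall>y\<in>{x0 + of_int j * h .. x0 + (of_int j + 1) * h}. f y = poly q y"
    using assms(2) unfolding cellwise_poly_def by blast
  moreover define e where "e = x - (x0 + of_int j * h)"
  ultimately have "e > 0" "\<forall>y\<in>{x-e<..<x}. f y = poly q y" using c by auto
  then show "\<exists>e>0. \<exists>P. \<forall>y\<in>{x-e<..<x}. f y = poly P y" by blast
next
  fix x
  define j where "j = \<lfloor>(x - x0) / h\<rfloor>"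
  have c: "x0 + of_int j * h \<le> x" "x < x0 + (of_int j + 1) * h"
    unfolding j_def by (rule floor_cell_bounds[OF assms(1)])+
  obtain q where "\<forall>y\<in>{x0 + of_int j * h .. x0 + (of_int j + 1) * h}. f y = poly q y"
    using assms(2) unfolding cellwise_poly_def by blast
  moreover define e where "e = x0 + (of_int j + 1) * h - x"
  ultimately have "e > 0" "\<forall>y\<in>{x<..<x+e}. f y = poly q y" using c by auto
  then show "\<exists>e>0. \<exists>P. \<forall>y\<in>{x<..<x+e}. f y = poly P y" by blast
qed

lemma cellwise_poly_locally_poly_at:
  assumes "h > 0" "cellwise_poly h x0 f" "x \<notin> grid_nodes h x0"
  shows "locally_poly_at f x"
proof -
  define j where "j = \<lfloor>(x - x0) / h\<rfloor>"
  have c: "x0 + of_int j * h \<le> x" "x < x0 + (of_int j + 1) * h"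
    unfolding j_def by (rule floor_cell_bounds[OF assms(1)])+
  have "x \<noteq> x0 + of_int j * h" using assms(3) unfolding grid_nodes_def by auto
  with c have "x \<in> {x0 + of_int j * h <..< x0 + (of_int j + 1) * h}" by auto
  moreover obtain q where "\<forall>y\<in>{x0 + of_int j * h .. x0 + (of_int j + 1) * h}. f y = poly q y"
    using assms(2) unfolding cellwise_poly_def by blast
  ultimately show ?thesis by (intro locally_poly_atI[OF open_greaterThanLessThan]) auto
qed

text \<open>One-sided polynomiality makes products of derivatives integrable; off the countable
  set \<open>N\<close> derivatives are computed classically, which is all that matters under the integral.\<close>
definition periodic_piecewise_poly :: "real \<Rightarrow> (real \<Rightarrow> real) \<Rightarrow> bool" where
  "periodic_piecewise_poly L f \<longleftrightarrow> (\<forall>x. f (x + L) = f x) \<and> one_sided_poly f \<and>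
     (\<exists>N. countable N \<and> (\<forall>x. x \<notin> N \<longrightarrow> locally_poly_at f x))"

lemma cellwise_poly_periodic_piecewise_poly:
  assumes "h > 0" "cellwise_poly h x0 f" "\<forall>x. f (x + L) = f x"
  shows "periodic_piecewise_poly L f"
proof -
  have "countable (grid_nodes h x0)" by (simp add: grid_nodes_def)
  then show ?thesis
    unfolding periodic_piecewise_poly_def
    using assms cellwise_poly_one_sided_poly cellwise_poly_locally_poly_at[OF assms(1,2)] by blast
qed

lemma periodic_piecewise_poly_binop:
  fixes op :: "real \<Rightarrow> real \<Rightarrow> real"
  assumes "periodic_piecewise_poly L f" "periodic_piecewise_poly L g"
    and op: "\<And>P Q. \<exists>R. \<forall>y. op (poly P y) (poly Q y) = poly R y"
  shows "periodic_piecewise_poly L (\<lambda>y. op (f y) (g y))"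
proof -
  obtain N1 where "countable N1" "\<forall>x. x \<notin> N1 \<longrightarrow> locally_poly_at f x"
    using assms(1) unfolding periodic_piecewise_poly_def by blast
  moreover obtain N2 where "countable N2" "\<forall>x. x \<notin> N2 \<longrightarrow> locally_poly_at g x"
    using assms(2) unfolding periodic_piecewise_poly_def by blast
  ultimately have "countable (N1 \<union> N2)"
    "\<forall>x. x \<notin> N1 \<union> N2 \<longrightarrow> locally_poly_at (\<lambda>y. op (f y) (g y)) x"
    by (simp_all add: locally_poly_at_binop op)
  moreover have "one_sided_poly (\<lambda>y. op (f y) (g y))"
    using assms one_sided_poly_binop[of f g op] unfolding periodic_piecewise_poly_def by blast
  ultimately show ?thesis
    using assms(1,2) unfolding periodic_piecewise_poly_def by auto
qed

lemma periodic_piecewise_poly_add [simp]: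
  "periodic_piecewise_poly L f \<Longrightarrow> periodic_piecewise_poly L g \<Longrightarrow>
    periodic_piecewise_poly L (\<lambda>y. f y + g y)"
  by (rule periodic_piecewise_poly_binop[where op="(+)"]) (auto intro: poly_add[symmetric])

lemma periodic_piecewise_poly_diff [simp]:
  "periodic_piecewise_poly L f \<Longrightarrow> periodic_piecewise_poly L g \<Longrightarrow>
    periodic_piecewise_poly L (\<lambda>y. f y - g y)"
  by (rule periodic_piecewise_poly_binop[where op="(-)"]) (auto intro: poly_diff[symmetric])

lemma poly_translate: "poly P (y + a) = poly (P \<circ>\<^sub>p [:a, 1:]) (y :: real)"
  by (simp add: poly_pcompose algebra_simps)

lemma periodic_piecewise_poly_shift [simp]:
  assumes "periodic_piecewise_poly L f"
  shows "periodic_piecewise_poly L (shift a f)"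
proof -
  obtain N where N: "countable N" "\<forall>x. x \<notin> N \<longrightarrow> locally_poly_at f x"
    using assms unfolding periodic_piecewise_poly_def by blast
  have "\<forall>x. f (x + L) = f x" using assms unfolding periodic_piecewise_poly_def by blast
  have "shift a f (x + L) = shift a f x" for x
    using \<open>\<forall>x. f (x + L) = f x\<close>[rule_format, of "x + a"] by (simp add: shift_def ac_simps)
  then have "\<forall>x. shift a f (x + L) = shift a f x" by blast
  moreover have "one_sided_poly (shift a f)"
    unfolding one_sided_poly_def
  proof (intro allI conjI)
    fix x
    obtain e P where "e > 0" "\<forall>y\<in>{x+a-e<..<x+a}. f y = poly P y"
      using assms unfolding periodic_piecewise_poly_def one_sided_poly_def by blast
    then have "e > 0" "\<forall>y\<in>{x-e<..<x}. shift a f y = poly (P \<circ>\<^sub>p [:a, 1:]) y"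
      by (auto simp: shift_def poly_translate[symmetric])
    then show "\<exists>e>0. \<exists>P. \<forall>y\<in>{x-e<..<x}. shift a f y = poly P y" by blast
  next
    fix x
    obtain e P where "e > 0" "\<forall>y\<in>{x+a<..<x+a+e}. f y = poly P y"
      using assms unfolding periodic_piecewise_poly_def one_sided_poly_def by blast
    then have "e > 0" "\<forall>y\<in>{x<..<x+e}. shift a f y = poly (P \<circ>\<^sub>p [:a, 1:]) y"
      by (auto simp: shift_def poly_translate[symmetric])
    then show "\<exists>e>0. \<exists>P. \<forall>y\<in>{x<..<x+e}. shift a f y = poly P y" by blast
  qed
  moreover have "locally_poly_at (shift a f) x" if "x \<notin> (\<lambda>y. y - a) ` N" for x
  proof -
    have "x + a \<notin> N" using that by force
    then obtain e P where "e > 0" "\<forall>y\<in>ball (x + a) e. f y = poly P y"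
      using N unfolding locally_poly_at_def by blast
    then have "e > 0" "\<forall>y\<in>ball x e. shift a f y = poly (P \<circ>\<^sub>p [:a, 1:]) y"
      by (auto simp: shift_def poly_translate[symmetric] dist_real_def)
    then show ?thesis unfolding locally_poly_at_def by blast
  qed
  ultimately show ?thesis
    unfolding periodic_piecewise_poly_def using N(1) by blast
qed

section \<open>The \<open>H^{m+1}\<close> semi-inner product\<close>

definition semi_inner :: "nat \<Rightarrow> real \<Rightarrow> (real \<Rightarrow> real) \<Rightarrow> (real \<Rightarrow> real) \<Rightarrow> real" where
  "semi_inner m L f g = integral {0..L} (\<lambda>x. (deriv ^^ Suc m) f x * (deriv ^^ Suc m) g x)"

lemma seminorm_sq_eq_semi_inner: "seminorm_sq m h K f = semi_inner m (real K * h) f f"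
  unfolding seminorm_sq_def semi_inner_def by (simp add: power2_eq_square)

lemma semi_inner_commute: "semi_inner m L f g = semi_inner m L g f"
  unfolding semi_inner_def by (simp add: mult.commute)

lemma integrable_higher_deriv_mult:
  assumes "one_sided_poly f" "one_sided_poly g"
  shows "(\<lambda>x. (deriv ^^ k) f x * (deriv ^^ k) g x) integrable_on {a..b}"
  by (intro one_sided_poly_integrable one_sided_poly_binop[where op="(*)"]
      one_sided_poly_higher_deriv assms) (metis poly_mult)

lemma semi_inner_lincomb_left:
  assumes "periodic_piecewise_poly L f1" "periodic_piecewise_poly L f2" "periodic_piecewise_poly L g"
  shows "semi_inner m L (\<lambda>x. f1 x + s * f2 x) g = semi_inner m L f1 g + s * semi_inner m L f2 g"
proof -
  obtain N1 where N1: "countable N1" "\<forall>x. x \<notin> N1 \<longrightarrow> locally_poly_at f1 x"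
    using assms(1) unfolding periodic_piecewise_poly_def by blast
  obtain N2 where N2: "countable N2" "\<forall>x. x \<notin> N2 \<longrightarrow> locally_poly_at f2 x"
    using assms(2) unfolding periodic_piecewise_poly_def by blast
  have "negligible (\<Union>x\<in>N1 \<union> N2. {x})"
    using N1 N2 by (intro negligible_countable_Union) auto
  then have "negligible (N1 \<union> N2)" by simp
  define D where "D f x = (deriv ^^ Suc m) f x * (deriv ^^ Suc m) g x" for f x
  have "D (\<lambda>x. f1 x + s * f2 x) x = D f1 x + s * D f2 x" if "x \<in> {0..L} - (N1 \<union> N2)" for x
    using higher_deriv_lincomb_locally_poly[of f1 x f2 "Suc m" 1 s] N1 N2 that
    by (simp add: D_def algebra_simps)
  then have "semi_inner m L (\<lambda>x. f1 x + s * f2 x) g = integral {0..L} (\<lambda>x. D f1 x + s * D f2 x)"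
    unfolding semi_inner_def D_def[symmetric]
    by (intro integral_spike[OF \<open>negligible (N1 \<union> N2)\<close>]) simp
  also have "\<dots> = semi_inner m L f1 g + s * semi_inner m L f2 g"
  proof -
    have "D f1 integrable_on {0..L}" "D f2 integrable_on {0..L}"
      using assms unfolding D_def periodic_piecewise_poly_def
      by (intro integrable_higher_deriv_mult; blast)+
    then show ?thesis
      unfolding semi_inner_def D_def[symmetric]
      by (simp add: integral_add integrable_on_mult_right integral_mult_right)
  qed
  finally show ?thesis .
qed

lemma semi_inner_add_left:
  "periodic_piecewise_poly L f1 \<Longrightarrow> periodic_piecewise_poly L f2 \<Longrightarrow> periodic_piecewise_poly L g \<Longrightarrow>
    semi_inner m L (\<lambda>x. f1 x + f2 x) g = semi_inner m L f1 g + semi_inner m L f2 g"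
  using semi_inner_lincomb_left[of L f1 f2 g m 1] by simp

lemma semi_inner_diff_left:
  "periodic_piecewise_poly L f1 \<Longrightarrow> periodic_piecewise_poly L f2 \<Longrightarrow> periodic_piecewise_poly L g \<Longrightarrow>
    semi_inner m L (\<lambda>x. f1 x - f2 x) g = semi_inner m L f1 g - semi_inner m L f2 g"
  using semi_inner_lincomb_left[of L f1 f2 g m "-1"] by simp

lemma semi_inner_add_right:
  "periodic_piecewise_poly L f1 \<Longrightarrow> periodic_piecewise_poly L f2 \<Longrightarrow> periodic_piecewise_poly L g \<Longrightarrow>
    semi_inner m L g (\<lambda>x. f1 x + f2 x) = semi_inner m L g f1 + semi_inner m L g f2"
  using semi_inner_add_left[of L f1 f2 g m] by (simp add: semi_inner_commute[of m L g])

lemma semi_inner_diff_right: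
  "periodic_piecewise_poly L f1 \<Longrightarrow> periodic_piecewise_poly L f2 \<Longrightarrow> periodic_piecewise_poly L g \<Longrightarrow>
    semi_inner m L g (\<lambda>x. f1 x - f2 x) = semi_inner m L g f1 - semi_inner m L g f2"
  using semi_inner_diff_left[of L f1 f2 g m] by (simp add: semi_inner_commute[of m L g])

lemma periodic_int_multiple:
  fixes F :: "real \<Rightarrow> real"
  assumes "\<forall>x. F (x + L) = F x"
  shows "F (x + of_int k * L) = F x"
proof -
  have nat: "F (y + real n * L) = F y" for y n
  proof (induction n)
    case (Suc n)
    have "F (y + real (Suc n) * L) = F ((y + real n * L) + L)" by (simp add: algebra_simps)
    then show ?case using assms Suc by simp
  qed simp
  show ?thesis
  proof (cases "k \<ge> 0")
    case True
    then show ?thesis using nat[of x "nat k"] by simp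
  next
    case False
    then show ?thesis using nat[of "x + of_int k * L" "nat (- k)"] by simp
  qed
qed

lemma integral_periodic_translate:
  fixes F :: "real \<Rightarrow> real"
  assumes "L > 0" and per: "\<forall>x. F (x + L) = F x" and int: "\<And>a b. F integrable_on {a..b}"
  shows "integral {c..c+L} F = integral {0..L} F"
proof -
  define k where "k = \<lfloor>c / L\<rfloor>"
  define r where "r = c - of_int k * L"
  have "of_int k \<le> c / L" "c / L < of_int k + 1" unfolding k_def by linarith+
  with \<open>L > 0\<close> have r: "0 \<le> r" "r < L"
    unfolding r_def by (simp_all add: le_divide_eq divide_less_eq algebra_simps)
  have shift_k: "F \<circ> (+) (of_int k * L) = F" and shift_L: "F \<circ> (+) L = F"
    using periodic_int_multiple[OF per] per by (auto simp: add.commute)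
  have "integral {c..c+L} F = integral {r + of_int k * L .. (r + L) + of_int k * L} F"
    unfolding r_def by simp
  also have "\<dots> = integral {r..r+L} F"
    using integral_shift_Icc_real[of r "r+L" F "of_int k * L"] shift_k by simp
  also have "\<dots> = integral {r..L} F + integral {L..r+L} F"
    using Henstock_Kurzweil_Integration.integral_combine[of r L "r+L" F] r int by simp
  also have "integral {L..r+L} F = integral {0..r} F"
    using integral_shift_Icc_real[of 0 r F L] shift_L by (simp add: add.commute)
  also have "integral {r..L} F + integral {0..r} F = integral {0..L} F"
    using Henstock_Kurzweil_Integration.integral_combine[of 0 r L F] r int by simp
  finally show ?thesis .
qed

lemma semi_inner_shift:
  assumes "periodic_piecewise_poly L f" "periodic_piecewise_poly L g" "L > 0"
  shows "semi_inner m L (shift a f) (shift a g) = semi_inner m L f g"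
proof -
  define F where "F = (\<lambda>x. (deriv ^^ Suc m) f x * (deriv ^^ Suc m) g x)"
  have "\<forall>x. F (x + L) = F x"
    using assms(1,2) higher_deriv_periodic[of f L "Suc m"] higher_deriv_periodic[of g L "Suc m"]
    unfolding F_def periodic_piecewise_poly_def by (simp del: funpow.simps)
  moreover have "\<And>a b. F integrable_on {a..b}"
    using assms(1,2) unfolding F_def periodic_piecewise_poly_def
    by (intro integrable_higher_deriv_mult) auto
  moreover have "semi_inner m L (shift a f) (shift a g) = integral {a..a+L} F"
    using integral_shift_Icc_real[of 0 L F a]
    unfolding semi_inner_def F_def shift_def higher_deriv_shift by (simp add: o_def add.commute)
  ultimately show ?thesis
    unfolding semi_inner_def F_def[symmetric] using integral_periodic_translate[OF assms(3)] by simp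
qed

section \<open>The Hermite interpolation operator\<close>

lemma hermite_interpolant_cell:
  assumes "hermite_interpolant m h K x0 f g"
  obtains q where "degree q \<le> 2 * m + 1"
    "\<forall>x\<in>{x0 + of_int j * h .. x0 + (of_int j + 1) * h}. g x = poly q x"
    "\<And>k. k \<le> m \<Longrightarrow> poly ((pderiv ^^ k) q) (x0 + of_int j * h) = (deriv ^^ k) f (x0 + of_int j * h)"
    "\<And>k. k \<le> m \<Longrightarrow>
      poly ((pderiv ^^ k) q) (x0 + (of_int j + 1) * h) = (deriv ^^ k) f (x0 + (of_int j + 1) * h)"
  using assms unfolding hermite_interpolant_def by blast

lemma hermite_interpolant_periodic:
  "hermite_interpolant m h K x0 f g \<Longrightarrow> g (x + real K * h) = g x"
  unfolding hermite_interpolant_def by blast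

lemma hermite_interpolant_cellwise_poly:
  "hermite_interpolant m h K x0 f g \<Longrightarrow> cellwise_poly h x0 g"
  unfolding hermite_interpolant_def cellwise_poly_def by blast

lemma hermite_interpolant_periodic_piecewise_poly:
  assumes "h > 0" "hermite_interpolant m h K x0 f g"
  shows "periodic_piecewise_poly (real K * h) g"
  using cellwise_poly_periodic_piecewise_poly[OF assms(1) hermite_interpolant_cellwise_poly[OF assms(2)]]
    hermite_interpolant_periodic[OF assms(2)] by blast

lemma hermite_range_periodic_piecewise_poly:
  "h > 0 \<Longrightarrow> f \<in> hermite_range m h K x0 \<Longrightarrow> periodic_piecewise_poly (real K * h) f"
  unfolding hermite_range_def using hermite_interpolant_periodic_piecewise_poly by blast

lemma hermite_interpolant_unique:
  assumes "h > 0" "hermite_interpolant m h K x0 f g1" "hermite_interpolant m h K x0 f g2"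
  shows "g1 = g2"
proof
  fix x
  define j where "j = \<lfloor>(x - x0) / h\<rfloor>"
  have x: "x \<in> {x0 + of_int j * h .. x0 + (of_int j + 1) * h}"
    using floor_cell_bounds[OF assms(1)] unfolding j_def by (simp add: less_imp_le)
  obtain q1 where q1: "degree q1 \<le> 2 * m + 1"
    "\<forall>x\<in>{x0 + of_int j * h .. x0 + (of_int j + 1) * h}. g1 x = poly q1 x"
    "\<And>k. k \<le> m \<Longrightarrow> poly ((pderiv ^^ k) q1) (x0 + of_int j * h) = (deriv ^^ k) f (x0 + of_int j * h)"
    "\<And>k. k \<le> m \<Longrightarrow>
      poly ((pderiv ^^ k) q1) (x0 + (of_int j + 1) * h) = (deriv ^^ k) f (x0 + (of_int j + 1) * h)"
    using hermite_interpolant_cell[OF assms(2), where j=j] by blast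
  obtain q2 where q2: "degree q2 \<le> 2 * m + 1"
    "\<forall>x\<in>{x0 + of_int j * h .. x0 + (of_int j + 1) * h}. g2 x = poly q2 x"
    "\<And>k. k \<le> m \<Longrightarrow> poly ((pderiv ^^ k) q2) (x0 + of_int j * h) = (deriv ^^ k) f (x0 + of_int j * h)"
    "\<And>k. k \<le> m \<Longrightarrow>
      poly ((pderiv ^^ k) q2) (x0 + (of_int j + 1) * h) = (deriv ^^ k) f (x0 + (of_int j + 1) * h)"
    using hermite_interpolant_cell[OF assms(3), where j=j] by blast
  have "q1 = q2"
    by (rule hermite_poly_unique[where a="x0 + of_int j * h" and b="x0 + (of_int j + 1) * h" and m=m])
      (use assms(1) q1 q2 in auto)
  then show "g1 x = g2 x" using q1(2) q2(2) x by auto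
qed

text \<open>The interpolant is assembled from the cell polynomials, each cell being half-open
  on the right; periodicity follows from uniqueness of the cell polynomials.\<close>
lemma hermite_interpolant_exists:
  assumes h: "h > 0" and per: "\<forall>x. f (x + real K * h) = f x"
  shows "\<exists>g. hermite_interpolant m h K x0 f g"
proof -
  define lft where "lft j = x0 + of_int j * h" for j :: int
  define rgt where "rgt j = x0 + (of_int j + 1) * h" for j :: int
  define fits where "fits j q \<longleftrightarrow> degree q \<le> 2 * m + 1 \<and>
    (\<forall>k\<le>m. poly ((pderiv ^^ k) q) (lft j) = (deriv ^^ k) f (lft j) \<and>
            poly ((pderiv ^^ k) q) (rgt j) = (deriv ^^ k) f (rgt j))" for j q
  define qq where "qq j = (SOME q. fits j q)" for j
  have lft_rgt: "lft j \<noteq> rgt j" for j using h by (simp add: lft_def rgt_def algebra_simps)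
  have qq: "fits j (qq j)" for j
    unfolding qq_def fits_def by (rule someI_ex, rule hermite_poly_exists[OF lft_rgt])
  define L where "L = real K * h"
  have dper: "(deriv ^^ k) f (y + L) = (deriv ^^ k) f y" for k y
    using higher_deriv_periodic[of f L k y] per unfolding L_def by blast
  have qq_periodic: "qq (j + int K) = qq j \<circ>\<^sub>p [:-L, 1:]" for j
  proof (rule hermite_poly_unique[OF lft_rgt[of "j + int K"], where m=m])
    have "lft (j + int K) = lft j + L" "rgt (j + int K) = rgt j + L"
      unfolding lft_def rgt_def L_def by (simp_all add: algebra_simps)
    then show "\<forall>k\<le>m. poly ((pderiv ^^ k) (qq (j + int K))) (lft (j + int K)) =
          poly ((pderiv ^^ k) (qq j \<circ>\<^sub>p [:- L, 1:])) (lft (j + int K))"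
      "\<forall>k\<le>m. poly ((pderiv ^^ k) (qq (j + int K))) (rgt (j + int K)) =
          poly ((pderiv ^^ k) (qq j \<circ>\<^sub>p [:- L, 1:])) (rgt (j + int K))"
      using qq[of "j + int K"] qq[of j]
      unfolding fits_def poly_higher_pderiv_pcompose_linear by (simp_all add: dper)
  qed (use qq in \<open>simp_all add: fits_def degree_pcompose\<close>)
  define g where "g x = poly (qq \<lfloor>(x - x0) / h\<rfloor>) x" for x
  have g_cell: "g x = poly (qq j) x" if x: "x \<in> {lft j .. rgt j}" for j x
  proof (cases "x < rgt j")
    case True
    then show ?thesis
      using x floor_eq_cell_index[OF h] unfolding g_def lft_def rgt_def by auto
  next
    case False
    with x have "x = rgt j" by simp
    moreover have "lft (j + 1) = rgt j" unfolding lft_def rgt_def by simp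
    moreover have "\<lfloor>(rgt j - x0) / h\<rfloor> = j + 1" using h unfolding rgt_def by simp
    ultimately show ?thesis
      using qq[of j] qq[of "j + 1"] unfolding g_def fits_def by (metis funpow_0 le0)
  qed
  have "g (x + real K * h) = g x" for x
  proof -
    have "(x + real K * h - x0) / h = (x - x0) / h + of_int (int K)"
      using h by (simp add: field_simps)
    then have "\<lfloor>(x + real K * h - x0) / h\<rfloor> = \<lfloor>(x - x0) / h\<rfloor> + int K" by simp
    then show ?thesis by (simp add: g_def qq_periodic poly_pcompose L_def)
  qed
  moreover have "\<exists>q. fits j q \<and> (\<forall>x\<in>{lft j .. rgt j}. g x = poly q x)" for j
    using qq g_cell by blast
  ultimately have "hermite_interpolant m h K x0 f g"
    unfolding hermite_interpolant_def fits_def lft_def rgt_def by blast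
  then show ?thesis by blast
qed

lemma hermite_op_interpolant:
  assumes "h > 0" "\<forall>x. f (x + real K * h) = f x"
  shows "hermite_interpolant m h K x0 f (hermite_op m h K x0 f)"
proof -
  have "\<exists>!g. hermite_interpolant m h K x0 f g"
    using hermite_interpolant_exists[OF assms] hermite_interpolant_unique[OF assms(1)] by blast
  then show ?thesis unfolding hermite_op_def by (rule theI')
qed

lemma higher_deriv_shift_apply: "(deriv ^^ k) (shift a f) x = (deriv ^^ k) f (x + a)"
  unfolding shift_def higher_deriv_shift by simp

lemma shift_mem_hermite_range:
  assumes "f \<in> hermite_range m h K x0"
  shows "shift a f \<in> hermite_range m h K (x0 - a)"
proof -
  have I: "hermite_interpolant m h K x0 f f" using assms unfolding hermite_range_def by simp
  have "shift a f (x + real K * h) = shift a f x" for x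
    using hermite_interpolant_periodic[OF I, of "x + a"] by (simp add: shift_def ac_simps)
  moreover have "\<exists>q. degree q \<le> 2 * m + 1 \<and>
      (\<forall>x\<in>{x0 - a + of_int j * h .. x0 - a + (of_int j + 1) * h}. shift a f x = poly q x) \<and>
      (\<forall>k\<le>m. poly ((pderiv ^^ k) q) (x0 - a + of_int j * h)
                = (deriv ^^ k) (shift a f) (x0 - a + of_int j * h) \<and>
              poly ((pderiv ^^ k) q) (x0 - a + (of_int j + 1) * h)
                = (deriv ^^ k) (shift a f) (x0 - a + (of_int j + 1) * h))" for j
  proof -
    obtain q where q: "degree q \<le> 2 * m + 1"
      "\<forall>x\<in>{x0 + of_int j * h .. x0 + (of_int j + 1) * h}. f x = poly q x"
      "\<And>k. k \<le> m \<Longrightarrow> poly ((pderiv ^^ k) q) (x0 + of_int j * h) = (deriv ^^ k) f (x0 + of_int j * h)"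
      "\<And>k. k \<le> m \<Longrightarrow>
        poly ((pderiv ^^ k) q) (x0 + (of_int j + 1) * h) = (deriv ^^ k) f (x0 + (of_int j + 1) * h)"
      using hermite_interpolant_cell[OF I, where j=j] by blast
    have "\<forall>x\<in>{x0 - a + of_int j * h .. x0 - a + (of_int j + 1) * h}.
        shift a f x = poly (q \<circ>\<^sub>p [:a, 1:]) x"
      using q(2) by (auto simp: shift_def poly_translate)
    with q show ?thesis
      by (intro exI[of _ "q \<circ>\<^sub>p [:a, 1:]"])
        (simp add: degree_pcompose poly_higher_pderiv_pcompose_linear higher_deriv_shift_apply)
  qed
  ultimately show ?thesis unfolding hermite_range_def hermite_interpolant_def by simp
qed

section \<open>Orthogonality of Hermite interpolation in the seminorm\<close>

lemma higher_deriv_hermite_range_cell: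
  assumes "hermite_interpolant m h K x0 g g" "k \<le> m"
  obtains q where
    "\<forall>x\<in>{x0 + of_int j * h .. x0 + (of_int j + 1) * h}. (deriv ^^ k) g x = poly ((pderiv ^^ k) q) x"
proof -
  define a where "a = x0 + of_int j * h"
  define b where "b = x0 + (of_int j + 1) * h"
  obtain q where q: "\<forall>x\<in>{a..b}. g x = poly q x"
    "poly ((pderiv ^^ k) q) a = (deriv ^^ k) g a" "poly ((pderiv ^^ k) q) b = (deriv ^^ k) g b"
    using hermite_interpolant_cell[OF assms(1), where j=j] assms(2) unfolding a_def b_def by metis
  have "\<forall>x\<in>{a<..<b}. (deriv ^^ k) g x = poly ((pderiv ^^ k) q) x"
    by (rule higher_deriv_eq_poly_on_open[OF open_greaterThanLessThan]) (use q(1) in auto)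
  with q(2,3) have "\<forall>x\<in>{a..b}. (deriv ^^ k) g x = poly ((pderiv ^^ k) q) x"
    by (metis atLeastAtMost_iff greaterThanLessThan_iff order_less_le)
  then show ?thesis using that unfolding a_def b_def by blast
qed

lemma isCont_higher_deriv_hermite_range:
  assumes h: "h > 0" and I: "hermite_interpolant m h K x0 g g" and "k \<le> m"
  shows "isCont ((deriv ^^ k) g) x"
proof -
  obtain jl where cl: "x0 + of_int jl * h < x" "x \<le> x0 + (of_int jl + 1) * h"
    using obtain_cell_left_open[OF h] .
  define jr where "jr = \<lfloor>(x - x0) / h\<rfloor>"
  have cr: "x0 + of_int jr * h \<le> x" "x < x0 + (of_int jr + 1) * h"
    unfolding jr_def by (rule floor_cell_bounds[OF h])+
  obtain ql where ql: "\<forall>y\<in>{x0 + of_int jl * h .. x0 + (of_int jl + 1) * h}.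
      (deriv ^^ k) g y = poly ((pderiv ^^ k) ql) y"
    using higher_deriv_hermite_range_cell[OF I \<open>k \<le> m\<close>] by blast
  obtain qr where qr: "\<forall>y\<in>{x0 + of_int jr * h .. x0 + (of_int jr + 1) * h}.
      (deriv ^^ k) g y = poly ((pderiv ^^ k) qr) y"
    using higher_deriv_hermite_range_cell[OF I \<open>k \<le> m\<close>] by blast
  define e where "e = min (x - (x0 + of_int jl * h)) (x0 + (of_int jr + 1) * h - x)"
  have "e > 0" using cl cr by (simp add: e_def)
  have "continuous_on {x-e..x} ((deriv ^^ k) g)"
    by (rule continuous_on_eq[OF continuous_on_poly[OF continuous_on_id, of _ "(pderiv ^^ k) ql"]])
      (use ql cl in \<open>auto simp: e_def\<close>)
  moreover have "continuous_on {x..x+e} ((deriv ^^ k) g)"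
    by (rule continuous_on_eq[OF continuous_on_poly[OF continuous_on_id, of _ "(pderiv ^^ k) qr"]])
      (use qr cr in \<open>auto simp: e_def\<close>)
  ultimately have "continuous_on ({x-e..x} \<union> {x..x+e}) ((deriv ^^ k) g)"
    by (intro continuous_on_closed_Un) auto
  moreover have "{x-e..x} \<union> {x..x+e} = {x-e..x+e}" using \<open>e > 0\<close> by auto
  moreover have "x \<in> interior {x-e..x+e}" using \<open>e > 0\<close> by simp
  ultimately show ?thesis by (metis continuous_on_interior)
qed

text \<open>Integration by parts \<open>m + 1\<close> times: the boundary terms telescope.\<close>
lemma repeated_parts_has_real_derivative:
  fixes U E :: "nat \<Rightarrow> real \<Rightarrow> real"
  assumes U: "\<And>k. (U k has_real_derivative U (Suc k) x) (at x)"
    and E: "\<And>k. (E k has_real_derivative E (Suc k) x) (at x)"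
    and "U (2 * m + 2) x = 0"
  shows "((\<lambda>y. \<Sum>i<Suc m. (-1) ^ i * (U (m + 1 + i) y * E (m - i) y))
          has_real_derivative U (m + 1) x * E (m + 1) x) (at x)"
proof -
  define T where "T i = (-1) ^ i * U (m + 1 + i) x * E (m + 1 - i) x" for i
  have "((\<lambda>y. \<Sum>i<Suc m. (-1) ^ i * (U (m + 1 + i) y * E (m - i) y)) has_real_derivative
      (\<Sum>i<Suc m. (-1) ^ i * (U (Suc (m + 1 + i)) x * E (m - i) x + E (Suc (m - i)) x * U (m + 1 + i) x)))
      (at x)"
    by (intro DERIV_sum DERIV_cmult DERIV_mult U E)
  also have "(\<Sum>i<Suc m. (-1) ^ i * (U (Suc (m + 1 + i)) x * E (m - i) x + E (Suc (m - i)) x * U (m + 1 + i) x))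
      = (\<Sum>i<Suc m. T i - T (Suc i))"
  proof (rule sum.cong[OF refl])
    fix i assume "i \<in> {..<Suc m}"
    then have "Suc (m - i) = m + 1 - i" "m + 1 - Suc i = m - i" by auto
    then show "(-1) ^ i * (U (Suc (m + 1 + i)) x * E (m - i) x + E (Suc (m - i)) x * U (m + 1 + i) x)
        = T i - T (Suc i)"
      unfolding T_def by (simp add: algebra_simps)
  qed
  also have "\<dots> = T 0 - T (Suc m)" by (rule sum_lessThan_telescope')
  also have "T (Suc m) = 0"
    using \<open>U (2 * m + 2) x = 0\<close> by (simp add: T_def numeral_2_eq_2)
  finally show ?thesis by (simp add: T_def)
qed

text \<open>\<open>g\<close> lives on a possibly different grid, so its finitely many breakpoints inside the
  cell are the exceptional set in the fundamental theorem of calculus; continuity of its first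
  \<open>m\<close> derivatives keeps the antiderivative continuous across them.\<close>
lemma hermite_orthogonality_cell:
  assumes h: "h > 0"
    and Iu: "hermite_interpolant m h K x1 f u"
    and Ig: "hermite_interpolant m h K y0 g g"
    and IA: "hermite_interpolant m h K x1 g A"
  shows "((\<lambda>x. (deriv ^^ Suc m) u x * (deriv ^^ Suc m) (\<lambda>y. g y - A y) x) has_integral 0)
           {x1 + of_int j * h .. x1 + (of_int j + 1) * h}"
proof -
  define a where "a = x1 + of_int j * h"
  define b where "b = x1 + (of_int j + 1) * h"
  have "a < b" using h by (simp add: a_def b_def algebra_simps)
  obtain Q where Q: "degree Q \<le> 2 * m + 1" "\<forall>x\<in>{a..b}. u x = poly Q x"
    using hermite_interpolant_cell[OF Iu, where j=j] unfolding a_def b_def by metis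
  obtain R where R: "\<forall>x\<in>{a..b}. A x = poly R x"
    "\<And>k. k \<le> m \<Longrightarrow> poly ((pderiv ^^ k) R) a = (deriv ^^ k) g a"
    "\<And>k. k \<le> m \<Longrightarrow> poly ((pderiv ^^ k) R) b = (deriv ^^ k) g b"
    using hermite_interpolant_cell[OF IA, where j=j] unfolding a_def b_def by metis
  define U where "U k x = poly ((pderiv ^^ k) Q) x" for k x
  define E where "E k x = (deriv ^^ k) g x - poly ((pderiv ^^ k) R) x" for k x
  define \<Phi> where "\<Phi> x = (\<Sum>i<Suc m. (-1) ^ i * (U (m + 1 + i) x * E (m - i) x))" for x
  define F where "F x = (deriv ^^ Suc m) u x * (deriv ^^ Suc m) (\<lambda>y. g y - A y) x" for x
  define S where "S = grid_nodes h y0 \<inter> {a..b}"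
  have "(\<Phi> has_real_derivative F x) (at x)" if x: "x \<in> {a<..<b} - S" for x
  proof -
    have "locally_poly_at g x"
      using x by (intro cellwise_poly_locally_poly_at[OF h hermite_interpolant_cellwise_poly[OF Ig]])
        (auto simp: S_def)
    moreover have "locally_poly_at A x"
      using x R(1) by (intro locally_poly_atI[OF open_greaterThanLessThan]) auto
    moreover have "(deriv ^^ Suc m) u x = U (Suc m) x"
      "(deriv ^^ Suc m) A x = poly ((pderiv ^^ Suc m) R) x"
    proof -
      have "\<forall>y\<in>{a<..<b}. u y = poly Q y" "\<forall>y\<in>{a<..<b}. A y = poly R y"
        using Q(2) R(1) by auto
      from higher_deriv_eq_poly_on_open[OF open_greaterThanLessThan this(1), rule_format, of x "Suc m"]
        higher_deriv_eq_poly_on_open[OF open_greaterThanLessThan this(2), rule_format, of x "Suc m"] x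
      show "(deriv ^^ Suc m) u x = U (Suc m) x"
        "(deriv ^^ Suc m) A x = poly ((pderiv ^^ Suc m) R) x"
        unfolding U_def by (auto simp del: funpow.simps)
    qed
    ultimately have "F x = U (m + 1) x * E (m + 1) x"
      using x higher_deriv_diff_locally_poly[of g x A "Suc m"] by (simp add: F_def E_def)
    moreover have "(E k has_real_derivative E (Suc k) x) (at x)" for k
      unfolding E_def by (intro DERIV_diff locally_poly_at_higher_deriv \<open>locally_poly_at g x\<close>)
        (simp add: poly_DERIV)
    moreover have "U (2 * m + 2) x = 0"
      using higher_pderiv_eq_0_if_degree_le[OF Q(1)] by (simp add: U_def)
    moreover have "(U k has_real_derivative U (Suc k) x) (at x)" for k
      unfolding U_def using poly_DERIV[of "(pderiv ^^ k) Q" x] by simp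
    ultimately show ?thesis
      unfolding \<Phi>_def using repeated_parts_has_real_derivative[of U x E m] by simp
  qed
  moreover have "continuous_on {a..b} (E k)" if "k \<le> m" for k
    unfolding E_def using isCont_higher_deriv_hermite_range[OF h Ig that]
    by (intro continuous_on_diff continuous_at_imp_continuous_on) (auto intro: continuous_intros)
  then have "continuous_on {a..b} \<Phi>"
    unfolding \<Phi>_def U_def by (intro continuous_intros) auto
  moreover have "\<Phi> a = 0" "\<Phi> b = 0" using R(2,3) by (simp_all add: \<Phi>_def E_def)
  moreover have "finite S" unfolding S_def by (rule finite_grid_nodes_Int_interval[OF h])
  ultimately have "(F has_integral (\<Phi> b - \<Phi> a)) {a..b}"
    using \<open>a < b\<close> has_real_derivative_iff_has_vector_derivative
    by (intro fundamental_theorem_of_calculus_interior_strong[of S]) auto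
  then show ?thesis using \<open>\<Phi> a = 0\<close> \<open>\<Phi> b = 0\<close> unfolding F_def a_def b_def by simp
qed

lemma has_integral_0_cells:
  fixes F :: "real \<Rightarrow> real"
  assumes "h > 0" and "\<And>j::int. (F has_integral 0) {x1 + of_int j * h .. x1 + (of_int j + 1) * h}"
  shows "(F has_integral 0) {x1 .. x1 + real n * h}"
proof (induction n)
  case 0
  then show ?case using has_integral_refl[of F x1] by simp
next
  case (Suc n)
  have "(F has_integral 0) {x1 + real n * h .. x1 + real (Suc n) * h}"
    using assms(2)[of "int n"] by (simp add: algebra_simps)
  with Suc have "(F has_integral (0 + 0)) {x1 .. x1 + real (Suc n) * h}"
    by (intro has_integral_combine) (use assms(1) in \<open>auto simp: algebra_simps\<close>)
  then show ?case by simp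
qed

theorem hermite_orthogonality:
  assumes "h > 0" "K \<ge> 1"
    and Iu: "hermite_interpolant m h K x1 f u"
    and Ig: "hermite_interpolant m h K y0 g g"
    and IA: "hermite_interpolant m h K x1 g A"
  shows "semi_inner m (real K * h) u (\<lambda>x. g x - A x) = 0"
proof -
  define L where "L = real K * h"
  have "L > 0" using assms(1,2) by (simp add: L_def)
  have per: "periodic_piecewise_poly L u \<and> periodic_piecewise_poly L (\<lambda>x. g x - A x)"
    using hermite_interpolant_periodic_piecewise_poly assms(1) Iu Ig IA unfolding L_def by auto
  define F where "F x = (deriv ^^ Suc m) u x * (deriv ^^ Suc m) (\<lambda>y. g y - A y) x" for x
  have "\<forall>x. F (x + L) = F x"
    using per higher_deriv_periodic[of u L "Suc m"] higher_deriv_periodic[of "\<lambda>x. g x - A x" L "Suc m"]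
    unfolding F_def periodic_piecewise_poly_def by (simp del: funpow.simps)
  moreover have "\<And>a b. F integrable_on {a..b}"
    using per unfolding F_def periodic_piecewise_poly_def by (intro integrable_higher_deriv_mult) auto
  moreover have "(F has_integral 0) {x1 .. x1 + L}"
    unfolding L_def F_def by (rule has_integral_0_cells[OF assms(1) hermite_orthogonality_cell[OF assms(1) Iu Ig IA]])
  ultimately have "integral {0..L} F = 0"
    using integral_periodic_translate[OF \<open>L > 0\<close>] integral_unique by metis
  then show ?thesis unfolding semi_inner_def F_def L_def .
qed

section \<open>Energy conservation of the Hermite leapfrog scheme\<close>

definition leapfrog_energy ::
    "nat \<Rightarrow> real \<Rightarrow> real \<Rightarrow> (real \<Rightarrow> real) \<Rightarrow> (real \<Rightarrow> real) \<Rightarrow> real" where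
  "leapfrog_energy m L a f g =
     semi_inner m L (\<lambda>x. f x - shift a g x) (\<lambda>x. f x - shift a g x) +
     semi_inner m L (\<lambda>x. f x + shift (- a) g x) (\<lambda>x. f x + shift (- a) g x)"

lemma Qh_eq_leapfrog_energy:
  "Qh m h K c dt p v t =
     leapfrog_energy m (real K * h) (c * dt / 2) (\<lambda>x. p x t) (\<lambda>x. v x (t - dt / 2))"
  unfolding Qh_def leapfrog_energy_def seminorm_sq_eq_semi_inner ..

lemma Rh_eq_leapfrog_energy:
  "Rh m h K c dt p v s =
     leapfrog_energy m (real K * h) (c * dt / 2) (\<lambda>x. v x s) (\<lambda>x. p x (s - dt / 2))"
  unfolding Rh_def leapfrog_energy_def seminorm_sq_eq_semi_inner ..

lemma energy_exchange:
  assumes "periodic_piecewise_poly L w" "periodic_piecewise_poly L a" "periodic_piecewise_poly L b"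
    "periodic_piecewise_poly L A" "periodic_piecewise_poly L B"
    and "semi_inner m L w (\<lambda>x. a x - A x) = 0" "semi_inner m L A (\<lambda>x. a x - A x) = 0"
    "semi_inner m L B (\<lambda>x. a x - A x) = 0" "semi_inner m L w (\<lambda>x. b x - B x) = 0"
    "semi_inner m L A (\<lambda>x. b x - B x) = 0" "semi_inner m L B (\<lambda>x. b x - B x) = 0"
  shows "semi_inner m L (\<lambda>x. b x - w x) (\<lambda>x. b x - w x) + semi_inner m L (\<lambda>x. a x + w x) (\<lambda>x. a x + w x)
       = semi_inner m L (\<lambda>x. w x + A x - B x - a x) (\<lambda>x. w x + A x - B x - a x)
       + semi_inner m L (\<lambda>x. w x + A x - B x + b x) (\<lambda>x. w x + A x - B x + b x)"
proof -
  note bilinear = semi_inner_add_left semi_inner_diff_left semi_inner_add_right semi_inner_diff_right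
  have orth: "semi_inner m L w a = semi_inner m L w A" "semi_inner m L A a = semi_inner m L A A"
    "semi_inner m L B a = semi_inner m L B A" "semi_inner m L w b = semi_inner m L w B"
    "semi_inner m L A b = semi_inner m L A B" "semi_inner m L B b = semi_inner m L B B"
    using assms by (simp_all add: bilinear)
  have "semi_inner m L a w = semi_inner m L w a" "semi_inner m L b w = semi_inner m L w b"
    "semi_inner m L A w = semi_inner m L w A" "semi_inner m L B w = semi_inner m L w B"
    "semi_inner m L A a = semi_inner m L a A" "semi_inner m L B a = semi_inner m L a B"
    "semi_inner m L b a = semi_inner m L a b" "semi_inner m L A b = semi_inner m L b A"
    "semi_inner m L B b = semi_inner m L b B" "semi_inner m L B A = semi_inner m L A B"
    by (simp_all add: semi_inner_commute)
  with assms(1-5) orth show ?thesis by (simp add: bilinear)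
qed

lemma leapfrog_energy_update:
  fixes w f :: "real \<Rightarrow> real" and a :: real
  assumes h: "h > 0" and K: "K \<ge> 1"
    and wR: "w \<in> hermite_range m h K x1" and fR: "f \<in> hermite_range m h K y0"
  defines "A \<equiv> hermite_op m h K x1 (shift a f)" and "B \<equiv> hermite_op m h K x1 (shift (- a) f)"
  shows "leapfrog_energy m (real K * h) a f w
       = leapfrog_energy m (real K * h) a (\<lambda>x. w x + A x - B x) f"
proof -
  define L where "L = real K * h"
  have "L > 0" using h K by (simp add: L_def)
  have Rp: "shift a f \<in> hermite_range m h K (y0 - a)" "shift (- a) f \<in> hermite_range m h K (y0 - - a)"
    by (rule shift_mem_hermite_range[OF fR])+
  then have Ip: "hermite_interpolant m h K (y0 - a) (shift a f) (shift a f)"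
    "hermite_interpolant m h K (y0 - - a) (shift (- a) f) (shift (- a) f)"
    and Iw: "hermite_interpolant m h K x1 w w"
    using wR unfolding hermite_range_def by simp_all
  have IAB: "hermite_interpolant m h K x1 (shift a f) A" "hermite_interpolant m h K x1 (shift (- a) f) B"
    unfolding A_def B_def using Ip hermite_interpolant_periodic
    by (blast intro: hermite_op_interpolant[OF h])+
  have pp: "periodic_piecewise_poly L w" "periodic_piecewise_poly L f"
    "periodic_piecewise_poly L A" "periodic_piecewise_poly L B"
    using hermite_range_periodic_piecewise_poly[OF h] wR fR
      hermite_interpolant_periodic_piecewise_poly[OF h] IAB unfolding L_def by blast+
  then have "periodic_piecewise_poly L (shift a f)" "periodic_piecewise_poly L (shift (- a) f)"
    by simp_all
  have "semi_inner m L X (\<lambda>x. shift a f x - A x) = 0" "semi_inner m L X (\<lambda>x. shift (- a) f x - B x) = 0"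
    if "X \<in> {w, A, B}" for X
    using that hermite_orthogonality[OF h K _ Ip(1) IAB(1)] hermite_orthogonality[OF h K _ Ip(2) IAB(2)]
      Iw IAB unfolding L_def by blast+
  then have "semi_inner m L (\<lambda>x. shift (- a) f x - w x) (\<lambda>x. shift (- a) f x - w x)
      + semi_inner m L (\<lambda>x. shift a f x + w x) (\<lambda>x. shift a f x + w x)
      = leapfrog_energy m L a (\<lambda>x. w x + A x - B x) f"
    unfolding leapfrog_energy_def using pp \<open>periodic_piecewise_poly L (shift a f)\<close>
      \<open>periodic_piecewise_poly L (shift (- a) f)\<close> by (intro energy_exchange) auto
  moreover have "semi_inner m L (\<lambda>x. f x - shift a w x) (\<lambda>x. f x - shift a w x)
      = semi_inner m L (\<lambda>x. shift (- a) f x - w x) (\<lambda>x. shift (- a) f x - w x)"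
    "semi_inner m L (\<lambda>x. f x + shift (- a) w x) (\<lambda>x. f x + shift (- a) w x)
      = semi_inner m L (\<lambda>x. shift a f x + w x) (\<lambda>x. shift a f x + w x)"
  proof -
    have unshift: "shift (- a) (\<lambda>x. f x - shift a w x) = (\<lambda>x. shift (- a) f x - w x)"
      "shift a (\<lambda>x. f x + shift (- a) w x) = (\<lambda>x. shift a f x + w x)"
      by (simp_all add: shift_def)
    have "periodic_piecewise_poly L (\<lambda>x. f x - shift a w x)"
      "periodic_piecewise_poly L (\<lambda>x. f x + shift (- a) w x)"
      using pp by simp_all
    from semi_inner_shift[OF this(1) this(1) \<open>L > 0\<close>, of m "- a", symmetric, unfolded unshift(1)]
      semi_inner_shift[OF this(2) this(2) \<open>L > 0\<close>, of m a, symmetric, unfolded unshift(2)]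
    show "semi_inner m L (\<lambda>x. f x - shift a w x) (\<lambda>x. f x - shift a w x)
      = semi_inner m L (\<lambda>x. shift (- a) f x - w x) (\<lambda>x. shift (- a) f x - w x)"
      "semi_inner m L (\<lambda>x. f x + shift (- a) w x) (\<lambda>x. f x + shift (- a) w x)
      = semi_inner m L (\<lambda>x. shift a f x + w x) (\<lambda>x. shift a f x + w x)" .
  qed
  ultimately show ?thesis unfolding leapfrog_energy_def L_def by linarith
qed

theorem mainTheorem1:
  fixes m K :: nat and h c dt :: real and p v :: "real \<Rightarrow> real \<Rightarrow> real"
  assumes "K \<ge> 1" and "h > 0" and "c > 0" and "dt > 0"
    and "\<And>n::nat. (\<lambda>x. p x (real n * dt)) \<in> hermite_range m h K 0"
    and "\<And>n::nat. (\<lambda>x. v x ((real n + 1 / 2) * dt)) \<in> hermite_range m h K (h / 2)"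
    and "(\<lambda>x. v x (- dt / 2)) \<in> hermite_range m h K (h / 2)"
    and "\<And>n::nat. (\<lambda>x. v x (real n * dt + dt / 2)) =
           (\<lambda>x. v x (real n * dt - dt / 2)
              + hermite_op m h K (h / 2) (shift (c * dt / 2) (\<lambda>y. p y (real n * dt))) x
              - hermite_op m h K (h / 2) (shift (- (c * dt / 2)) (\<lambda>y. p y (real n * dt))) x)"
    and "\<And>n::nat. (\<lambda>x. p x (real n * dt + dt)) =
           (\<lambda>x. p x (real n * dt)
              + hermite_op m h K 0 (shift (c * dt / 2) (\<lambda>y. v y (real n * dt + dt / 2))) x
              - hermite_op m h K 0 (shift (- (c * dt / 2)) (\<lambda>y. v y (real n * dt + dt / 2))) x)"
  shows "\<forall>n::nat.
           Qh m h K c dt p v ((real n + 1) * dt) = Rh m h K c dt p v ((real n + 1 / 2) * dt)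
         \<and> Rh m h K c dt p v ((real n + 1 / 2) * dt) = Qh m h K c dt p v (real n * dt)
         \<and> Qh m h K c dt p v (real n * dt) = Qh m h K c dt p v 0
         \<and> Rh m h K c dt p v ((real n + 1 / 2) * dt) = Qh m h K c dt p v 0"
proof -
  note energy_step = leapfrog_energy_update[OF assms(2,1), where a="c * dt / 2"]
  have times: "(real n + 1 / 2) * dt = real n * dt + dt / 2" "(real n + 1) * dt = real n * dt + dt"
    "real (Suc n) * dt - dt / 2 = real n * dt + dt / 2" "real n * dt + dt - dt / 2 = real n * dt + dt / 2"
    for n
    by (simp_all add: algebra_simps)
  have v_range: "(\<lambda>x. v x (real n * dt - dt / 2)) \<in> hermite_range m h K (h / 2)" for n
  proof (cases n)
    case (Suc k)
    show ?thesis unfolding Suc times(3) by (rule assms(6)[of k, unfolded times(1)])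
  qed (use assms(7) in simp)
  have R_eq_Q: "Rh m h K c dt p v ((real n + 1 / 2) * dt) = Qh m h K c dt p v (real n * dt)" for n
    unfolding Rh_eq_leapfrog_energy Qh_eq_leapfrog_energy times(1) add_diff_cancel_right' assms(8)
    by (rule energy_step[OF v_range assms(5), symmetric])
  have Q_eq_R: "Qh m h K c dt p v ((real n + 1) * dt) = Rh m h K c dt p v ((real n + 1 / 2) * dt)" for n
    unfolding Rh_eq_leapfrog_energy Qh_eq_leapfrog_energy times(1,2,4) add_diff_cancel_right' assms(9)
    by (rule energy_step[OF assms(5) assms(6)[unfolded times(1)], symmetric])
  have Q_step: "Qh m h K c dt p v (real (Suc n) * dt) = Qh m h K c dt p v (real n * dt)" for n
    using Q_eq_R[of n] R_eq_Q[of n] by (simp add: add.commute)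
  have "Qh m h K c dt p v (real n * dt) = Qh m h K c dt p v 0" for n
    by (induction n) (use Q_step in auto)
  with Q_eq_R R_eq_Q show ?thesis by simp
qed

end
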